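(* Let $P$ be a set of $n$ points in the plane in general position and run the conflict-list randomized incremental construction of the Delaunay triangulation with a uniformly random insertion order. Then for every constant $c>0$ there is a constant $C>0$ such that, for every stage $i\le n$, the work of stage $i$ is at most $C\,n\log n$ with probability at least $1-n^{-c}$. *)

theory Defs
  imports "HOL-Probability.Probability" "HOL-Combinatorics.Multiset_Permutations"
begin

type_synonym pt = "real \<times> real"

text \<open>Orientation predicate: positive iff a, b, c are in counterclockwise order.\<close>
definition orient :: "pt \<Rightarrow> pt \<Rightarrow> pt \<Rightarrow> real" where
  "orient a b c = (fst b - fst a) * (snd c - snd a) - (snd b - snd a) * (fst c - fst a)"

text \<open>In-circle determinant: for counterclockwise a, b, c it is positive iff d lies
  strictly inside the circumcircle of a, b, c.\<close>
definition incircle :: "pt \<Rightarrow> pt \<Rightarrow> pt \<Rightarrow> pt \<Rightarrow> real" where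
  "incircle a b c d =
     (let ax = fst a - fst d; ay = snd a - snd d;
          bx = fst b - fst d; by = snd b - snd d;
          cx = fst c - fst d; cy = snd c - snd d;
          a2 = ax^2 + ay^2; b2 = bx^2 + by^2; c2 = cx^2 + cy^2
      in ax * (by * c2 - b2 * cy) - ay * (bx * c2 - b2 * cx) + a2 * (bx * cy - by * cx))"

definition general_position :: "pt set \<Rightarrow> bool" where
  "general_position P \<longleftrightarrow>
     (\<forall>a\<in>P. \<forall>b\<in>P. \<forall>c\<in>P. distinct [a, b, c] \<longrightarrow> orient a b c \<noteq> 0) \<and>
     (\<forall>a\<in>P. \<forall>b\<in>P. \<forall>c\<in>P. \<forall>d\<in>P. distinct [a, b, c, d] \<longrightarrow> incircle a b c d \<noteq> 0)"

text \<open>Configurations of the Delaunay triangulation: bounded triangles (given by their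
  vertex set) and unbounded faces, represented by directed hull edges (a, b) with the
  point set on the left of a->b.\<close>
datatype cfg = Tri "pt set" | HEdge pt pt

definition delaunay_triangles :: "pt set \<Rightarrow> pt set set" where
  "delaunay_triangles S =
     {{a, b, c} | a b c. a \<in> S \<and> b \<in> S \<and> c \<in> S \<and> orient a b c > 0 \<and>
                         (\<forall>d\<in>S. \<not> incircle a b c d > 0)}"

definition hull_edges :: "pt set \<Rightarrow> (pt \<times> pt) set" where
  "hull_edges S = {(a, b) | a b. a \<in> S \<and> b \<in> S \<and> a \<noteq> b \<and> (\<forall>d\<in>S. orient a b d \<ge> 0)}"

definition DT :: "pt set \<Rightarrow> cfg set" where
  "DT S = Tri ` delaunay_triangles S \<union> (\<lambda>(a, b). HEdge a b) ` hull_edges S"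

fun in_conflict :: "cfg \<Rightarrow> pt \<Rightarrow> bool" where
  "in_conflict (Tri T) q = (\<exists>a b c. T = {a, b, c} \<and> orient a b c > 0 \<and> incircle a b c q > 0)"
| "in_conflict (HEdge a b) q = (orient a b q < 0)"

definition conflict_list :: "cfg \<Rightarrow> pt set \<Rightarrow> pt set" where
  "conflict_list t R = {q \<in> R. in_conflict t q}"

text \<open>Work of stage i (1-based) of the conflict-list randomized incremental construction
  for insertion order xs: stage i inserts xs ! (i - 1).\<close>
definition stage_work :: "pt list \<Rightarrow> nat \<Rightarrow> nat" where
  "stage_work xs i =
     (let Sold = set (take (i - 1) xs); Snew = set (take i xs);
          Rold = set (drop (i - 1) xs); Rnew = set (drop i xs);
          created = DT Snew - DT Sold; destroyed = DT Sold - DT Snew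
      in (\<Sum>t\<in>created. 1 + card (conflict_list t Rnew)) +
         (\<Sum>t\<in>destroyed. 1 + card (conflict_list t Rold)))"

end

theory Submission
  imports Defs
begin

text \<open>A face of the Delaunay triangulation of the first \<open>j\<close> inserted points conflicts with
  none of them. So if its conflict list in all of \<open>P\<close> has \<open>k\<close> points, the first \<open>j\<close> points of
  the random order avoided these \<open>k\<close> points, which happens with probability at most
  \<open>exp (- k * j / n)\<close>. Since only \<open>O(n^3)\<close> faces can ever occur, with probability
  \<open>1 - O(n powr - c)\<close> every face present after \<open>j\<close> insertions has fewer than
  \<open>(c + 5) * n * ln n / j\<close> conflicts. Stage \<open>i\<close> only touches faces of the triangulations of
  \<open>i - 1\<close> and \<open>i\<close> points, and a Delaunay triangulation of \<open>m\<close> points in general position has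
  at most \<open>3 * m\<close> faces; hence the work of stage \<open>i\<close> is \<open>O(n * ln n)\<close>.\<close>

section \<open>Delaunay triangles and the lifting map\<close>

lemma orient_rotate: "orient b c a = orient a b c"
  unfolding orient_def by (simp add: algebra_simps)

lemma orient_swap: "orient a c b = - orient a b c"
  unfolding orient_def by (simp add: algebra_simps)

lemma orient_pos_distinct: "orient a b c > 0 \<Longrightarrow> distinct [a, b, c]"
  unfolding orient_def by auto

lemma incircle_rotate: "incircle b c a d = incircle a b c d"
  unfolding incircle_def Let_def by (simp add: algebra_simps)

lemma incircle_vertices: "incircle a b c a = 0" "incircle a b c b = 0" "incircle a b c c = 0"
  unfolding incircle_def Let_def by (simp_all add: algebra_simps power2_eq_square)

lemma triple_set_eq_cases:
  assumes "{a, b, c} = {a', b', c'}" "distinct [a, b, c]" "distinct [a', b', c']"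
  shows "(a', b', c') \<in> {(a, b, c), (b, c, a), (c, a, b), (a, c, b), (b, a, c), (c, b, a)}"
  using assms by (simp add: insert_eq_iff doubleton_eq_iff)
    (smt (verit) insertE singletonD insertI1 insertI2 insert_commute)

lemma incircle_ccw_triangle_eq:
  assumes "{a, b, c} = {a', b', c'}" "orient a b c > 0" "orient a' b' c' > 0"
  shows "incircle a' b' c' = incircle a b c"
  using triple_set_eq_cases[OF assms(1) orient_pos_distinct[OF assms(2)] orient_pos_distinct[OF assms(3)]]
    assms(2,3) orient_swap[of a b c] orient_swap[of b c a] orient_swap[of c a b]
  by (auto simp: fun_eq_iff orient_rotate incircle_rotate)

lemma incircle_affine_in_lift:
  "\<exists>\<alpha> \<beta> \<gamma>. \<forall>d. incircle a b c d = \<alpha> * fst d + \<beta> * snd d + \<gamma> - orient a b c * norm d ^ 2"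
proof -
  define L where "L p = fst p ^ 2 + snd p ^ 2" for p :: pt
  \<comment> \<open>cofactors of the in-circle determinant as a 4 by 4 determinant with rows \<open>(x, y, L, 1)\<close>\<close>
  define \<alpha> where "\<alpha> = snd c * L b - snd b * L c + snd a * (L c - L b) - L a * (snd c - snd b)"
  define \<beta> where "\<beta> = fst b * L c - fst c * L b - fst a * (L c - L b) + L a * (fst c - fst b)"
  define \<gamma> where "\<gamma> = fst a * (snd b * L c - L b * snd c) - snd a * (fst b * L c - L b * fst c)
                     + L a * (fst b * snd c - snd b * fst c)"
  have "incircle a b c d = \<alpha> * fst d + \<beta> * snd d + \<gamma> - orient a b c * L d" for d
    unfolding incircle_def orient_def \<alpha>_def \<beta>_def \<gamma>_def L_def Let_def
    by (simp add: power2_eq_square algebra_simps)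
  moreover have "L d = norm d ^ 2" for d
    by (cases d) (simp add: L_def norm_Pair)
  ultimately show ?thesis by metis
qed

lemma incircle_convex_combination:
  assumes "l1 + l2 + l3 = 1" and "z = l1 *\<^sub>R u1 + l2 *\<^sub>R u2 + l3 *\<^sub>R u3"
  shows "l1 * incircle a b c u1 + l2 * incircle a b c u2 + l3 * incircle a b c u3
         = incircle a b c z - orient a b c * (l1 * norm u1 ^ 2 + l2 * norm u2 ^ 2 + l3 * norm u3 ^ 2 - norm z ^ 2)"
proof -
  obtain \<alpha> \<beta> \<gamma>
    where f: "\<And>d. incircle a b c d = \<alpha> * fst d + \<beta> * snd d + \<gamma> - orient a b c * norm d ^ 2"
    using incircle_affine_in_lift by blast
  have l3: "l3 = 1 - l1 - l2" using assms(1) by simp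
  show ?thesis unfolding f assms(2) l3 by (simp add: algebra_simps)
qed

lemma general_position_subset: "general_position P \<Longrightarrow> S \<subseteq> P \<Longrightarrow> general_position S"
  unfolding general_position_def by blast

definition delaunay_ccw :: "pt set \<Rightarrow> pt \<Rightarrow> pt \<Rightarrow> pt \<Rightarrow> bool" where
  "delaunay_ccw S a b c \<longleftrightarrow>
     a \<in> S \<and> b \<in> S \<and> c \<in> S \<and> orient a b c > 0 \<and> (\<forall>d\<in>S. incircle a b c d \<le> 0)"

lemma delaunay_triangles_eq: "delaunay_triangles S = {{a, b, c} | a b c. delaunay_ccw S a b c}"
  unfolding delaunay_triangles_def delaunay_ccw_def by (simp add: not_less)

lemma delaunay_ccw_rotate: "delaunay_ccw S b c a = delaunay_ccw S a b c"
  unfolding delaunay_ccw_def by (auto simp: orient_rotate incircle_rotate)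

lemma delaunay_ccw_cocircular:
  assumes "general_position S" "delaunay_ccw S a b c" "d \<in> S" "incircle a b c d = 0"
  shows "d \<in> {a, b, c}"
proof (rule ccontr)
  assume "d \<notin> {a, b, c}"
  moreover have "distinct [a, b, c]"
    using assms(2) orient_pos_distinct unfolding delaunay_ccw_def by blast
  ultimately have "distinct [a, b, c, d]" by auto
  with assms show False unfolding general_position_def delaunay_ccw_def by blast
qed

text \<open>Lift every point \<open>p\<close> to \<open>(p, norm p ^ 2)\<close> on the paraboloid. Over \<open>z\<close>, the planes
  through the two lifted triangles lie at heights \<open>h\<close> and \<open>h'\<close> above the paraboloid. Each empty
  circle puts the lifted vertices of the other triangle weakly above its plane, so \<open>h = h'\<close>,
  and then \<open>a\<close>, \<open>b\<close>, \<open>c\<close> lie on the circumcircle of \<open>a'\<close>, \<open>b'\<close>, \<open>c'\<close>.\<close>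
lemma delaunay_ccw_overlap_subset:
  assumes gp: "general_position S"
    and T: "delaunay_ccw S a b c" and T': "delaunay_ccw S a' b' c'"
    and l: "l1 > 0" "l2 > 0" "l3 > 0" "l1 + l2 + l3 = 1"
    and m: "m1 \<ge> 0" "m2 \<ge> 0" "m3 \<ge> 0" "m1 + m2 + m3 = 1"
    and z: "z = l1 *\<^sub>R a + l2 *\<^sub>R b + l3 *\<^sub>R c" "z = m1 *\<^sub>R a' + m2 *\<^sub>R b' + m3 *\<^sub>R c'"
  shows "{a, b, c} \<subseteq> {a', b', c'}"
proof -
  let ?f = "incircle a b c" and ?f' = "incircle a' b' c'"
  define h where "h = l1 * norm a ^ 2 + l2 * norm b ^ 2 + l3 * norm c ^ 2 - norm z ^ 2"
  define h' where "h' = m1 * norm a' ^ 2 + m2 * norm b' ^ 2 + m3 * norm c' ^ 2 - norm z ^ 2"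
  have o: "orient a b c > 0" "orient a' b' c' > 0" and
    empty: "\<forall>d\<in>S. ?f d \<le> 0" "\<forall>d\<in>S. ?f' d \<le> 0" and
    S: "a \<in> S" "b \<in> S" "c \<in> S" "a' \<in> S" "b' \<in> S" "c' \<in> S"
    using T T' by (auto simp: delaunay_ccw_def)
  have "?f z = orient a b c * h"
    using incircle_convex_combination[OF l(4) z(1), of a b c] by (simp add: incircle_vertices h_def)
  then have "m1 * ?f a' + m2 * ?f b' + m3 * ?f c' = orient a b c * (h - h')"
    using incircle_convex_combination[OF m(4) z(2), of a b c] by (simp add: h'_def algebra_simps)
  moreover have "m1 * ?f a' + m2 * ?f b' + m3 * ?f c' \<le> 0"
    using empty S m by (simp add: add_nonpos_nonpos mult_nonneg_nonpos)
  ultimately have "h \<le> h'" using o by (simp add: mult_le_0_iff)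
  have "?f' z = orient a' b' c' * h'"
    using incircle_convex_combination[OF m(4) z(2), of a' b' c'] by (simp add: incircle_vertices h'_def)
  then have sum: "l1 * ?f' a + l2 * ?f' b + l3 * ?f' c = orient a' b' c' * (h' - h)"
    using incircle_convex_combination[OF l(4) z(1), of a' b' c'] by (simp add: h_def algebra_simps)
  have terms: "l1 * ?f' a \<le> 0" "l2 * ?f' b \<le> 0" "l3 * ?f' c \<le> 0"
    using empty S l by (simp_all add: mult_nonneg_nonpos)
  then have "orient a' b' c' * (h' - h) \<le> 0" using sum by linarith
  then have "h' \<le> h" using o by (simp add: mult_le_0_iff)
  with \<open>h \<le> h'\<close> sum have "l1 * ?f' a + l2 * ?f' b + l3 * ?f' c = 0" by simp
  with terms have "l1 * ?f' a = 0" "l2 * ?f' b = 0" "l3 * ?f' c = 0" by linarith+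
  then have "?f' a = 0" "?f' b = 0" "?f' c = 0" using l by simp_all
  then show ?thesis using delaunay_ccw_cocircular[OF gp T'] S by blast
qed

lemma ccw_angle_point_in_triangle:
  assumes o: "orient v a b > 0" and p: "orient v a p > 0" "orient v p b > 0"
    and t: "t > 0" "t * (orient v a p + orient v p b) < orient v a b"
  shows "\<exists>l1 l2 l3. l1 > 0 \<and> l2 > 0 \<and> l3 > 0 \<and> l1 + l2 + l3 = 1 \<and>
           v + t *\<^sub>R (p - v) = l1 *\<^sub>R v + l2 *\<^sub>R a + l3 *\<^sub>R b"
proof -
  define l2 where "l2 = t * orient v p b / orient v a b"
  define l3 where "l3 = t * orient v a p / orient v a b"
  have cramer: "orient v p b *\<^sub>R (a - v) + orient v a p *\<^sub>R (b - v) = orient v a b *\<^sub>R (p - v)"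
    by (simp add: orient_def prod_eq_iff algebra_simps)
  have "l2 *\<^sub>R (a - v) + l3 *\<^sub>R (b - v) = (t / orient v a b) *\<^sub>R
          (orient v p b *\<^sub>R (a - v) + orient v a p *\<^sub>R (b - v))"
    by (simp add: l2_def l3_def scaleR_add_right)
  also have "\<dots> = t *\<^sub>R (p - v)" using o by (simp add: cramer)
  finally have comb: "v + t *\<^sub>R (p - v) = (1 - l2 - l3) *\<^sub>R v + l2 *\<^sub>R a + l3 *\<^sub>R b"
    by (simp add: algebra_simps)
  have "l2 + l3 < 1"
    using o t by (simp add: l2_def l3_def add_divide_distrib[symmetric] algebra_simps)
  moreover have "l2 > 0" "l3 > 0" using o p t by (simp_all add: l2_def l3_def)
  ultimately show ?thesis using comb by (intro exI[of _ "1 - l2 - l3"] exI[of _ l2] exI[of _ l3]) simp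
qed

lemma delaunay_ccw_common_angle_eq:
  assumes gp: "general_position S"
    and T: "delaunay_ccw S v a b" and T': "delaunay_ccw S v a' b'"
    and p: "orient v a p > 0" "orient v p b > 0" "orient v a' p > 0" "orient v p b' > 0"
  shows "{v, a, b} = {v, a', b'}"
proof -
  have o: "orient v a b > 0" "orient v a' b' > 0" using T T' by (simp_all add: delaunay_ccw_def)
  define X where "X = (orient v a p + orient v p b) / orient v a b"
  define X' where "X' = (orient v a' p + orient v p b') / orient v a' b'"
  define t where "t = 1 / (1 + X + X')"
  have "X > 0" "X' > 0" using o p by (simp_all add: X_def X'_def)
  then have t: "t > 0" "t * X < 1" "t * X' < 1" by (simp_all add: t_def)
  obtain l1 l2 l3 where l: "l1 > 0" "l2 > 0" "l3 > 0" "l1 + l2 + l3 = 1"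
    and zl: "v + t *\<^sub>R (p - v) = l1 *\<^sub>R v + l2 *\<^sub>R a + l3 *\<^sub>R b"
    using ccw_angle_point_in_triangle[OF o(1) p(1,2) t(1)] t(2) o(1)
    by (auto simp: X_def mult.commute pos_divide_less_eq)
  obtain m1 m2 m3 where m: "m1 > 0" "m2 > 0" "m3 > 0" "m1 + m2 + m3 = 1"
    and zm: "v + t *\<^sub>R (p - v) = m1 *\<^sub>R v + m2 *\<^sub>R a' + m3 *\<^sub>R b'"
    using ccw_angle_point_in_triangle[OF o(2) p(3,4) t(1)] t(3) o(2)
    by (auto simp: X'_def mult.commute pos_divide_less_eq)
  have "{v, a, b} \<subseteq> {v, a', b'}"
    using delaunay_ccw_overlap_subset[OF gp T T' l m(1-3)[THEN less_imp_le] m(4) zl zm] .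
  moreover have "{v, a', b'} \<subseteq> {v, a, b}"
    using delaunay_ccw_overlap_subset[OF gp T' T m l(1-3)[THEN less_imp_le] l(4) zm zl] .
  ultimately show ?thesis by blast
qed

section \<open>Size of the Delaunay triangulation\<close>

definition lexlt :: "pt \<Rightarrow> pt \<Rightarrow> bool" where
  "lexlt p q \<longleftrightarrow> fst p < fst q \<or> fst p = fst q \<and> snd p < snd q"

lemma lexlt_total: "p \<noteq> q \<Longrightarrow> lexlt p q \<or> lexlt q p"
  unfolding lexlt_def by (cases p; cases q) auto

lemma lexlt_trans: "lexlt p q \<Longrightarrow> lexlt q r \<Longrightarrow> lexlt p r"
  unfolding lexlt_def by auto

lemma lexlt_asym: "lexlt p q \<Longrightarrow> \<not> lexlt q p"
  unfolding lexlt_def by auto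

lemma lexlt_eventually_linear_less:
  assumes "lexlt p q"
  shows "\<forall>\<^sub>F d in at_right 0. fst p + d * snd p < fst q + d * snd q"
proof (cases "fst p < fst q")
  case True
  have "((\<lambda>d. (fst q + d * snd q) - (fst p + d * snd p)) \<longlongrightarrow> fst q - fst p) (at_right 0)"
    by (auto intro!: tendsto_eq_intros)
  from order_tendstoD(1)[OF this, of 0] True show ?thesis by simp
next
  case False
  with assms have "fst q = fst p" "snd p < snd q" by (auto simp: lexlt_def)
  then show ?thesis using eventually_at_right_less[of 0] by (auto elim: eventually_mono)
qed

lemma lex_straddle_common_angle_point:
  assumes "lexlt x v \<and> lexlt v y \<and> lexlt x' v \<and> lexlt v y' \<or>
           lexlt v x \<and> lexlt y v \<and> lexlt v x' \<and> lexlt y' v"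
  shows "\<exists>p. orient v x p > 0 \<and> orient v p y > 0 \<and> orient v x' p > 0 \<and> orient v p y' > 0"
proof -
  have at_right_ne_bot: "at_right (0::real) \<noteq> bot" by simp
  let ?P = "\<lambda>p. orient v x p > 0 \<and> orient v p y > 0 \<and> orient v x' p > 0 \<and> orient v p y' > 0"
  from assms consider "lexlt x v" "lexlt v y" "lexlt x' v" "lexlt v y'"
    | "lexlt v x" "lexlt y v" "lexlt v x'" "lexlt y' v" by blast
  then show ?thesis
  proof cases
    case 1
    then have "\<forall>\<^sub>F d in at_right 0. ?P (fst v + d, snd v - 1)"
      unfolding orient_def
      by (auto simp: algebra_simps intro!: eventually_conj lexlt_eventually_linear_less)
    from eventually_happens'[OF at_right_ne_bot this] show ?thesis by blast
  next
    case 2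
    then have "\<forall>\<^sub>F d in at_right 0. ?P (fst v - d, snd v + 1)"
      unfolding orient_def
      by (auto simp: algebra_simps intro!: eventually_conj lexlt_eventually_linear_less)
    from eventually_happens'[OF at_right_ne_bot this] show ?thesis by blast
  qed
qed

text \<open>Every Delaunay triangle lies in the fan of its lexicographic median
  vertex, and a fan contains at most one triangle; this gives the bound \<open>2 * card S\<close>.\<close>
definition lex_fan :: "pt set \<Rightarrow> pt \<Rightarrow> bool \<Rightarrow> pt set set" where
  "lex_fan S v up = {{v, x, y} | x y. delaunay_ccw S v x y \<and>
     (if up then lexlt x v \<and> lexlt v y else lexlt v x \<and> lexlt y v)}"

lemma lex_fan_subsingleton:
  assumes "general_position S" "T \<in> lex_fan S v up" "T' \<in> lex_fan S v up"
  shows "T = T'"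
proof -
  obtain x y x' y' where T: "T = {v, x, y}" "delaunay_ccw S v x y"
    and T': "T' = {v, x', y'}" "delaunay_ccw S v x' y'"
    and lex: "if up then lexlt x v \<and> lexlt v y else lexlt v x \<and> lexlt y v"
             "if up then lexlt x' v \<and> lexlt v y' else lexlt v x' \<and> lexlt y' v"
    using assms(2,3) unfolding lex_fan_def by blast
  from lex obtain p where
    "orient v x p > 0" "orient v p y > 0" "orient v x' p > 0" "orient v p y' > 0"
    using lex_straddle_common_angle_point[of x v y x' y'] by (auto split: if_splits)
  with delaunay_ccw_common_angle_eq[OF assms(1) T(2) T'(2)] T T' show ?thesis by simp
qed

lemma delaunay_triangles_subset_lex_fans:
  "delaunay_triangles S \<subseteq> (\<Union>(v, up) \<in> S \<times> UNIV. lex_fan S v up)"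
proof
  fix T assume "T \<in> delaunay_triangles S"
  then obtain a b c where T: "T = {a, b, c}" "delaunay_ccw S a b c"
    unfolding delaunay_triangles_eq by blast
  then have "distinct [a, b, c]" unfolding delaunay_ccw_def using orient_pos_distinct by blast
  then have "lexlt a b \<or> lexlt b a" "lexlt b c \<or> lexlt c b" "lexlt a c \<or> lexlt c a"
    using lexlt_total by auto
  then obtain v x y where rot: "(v, x, y) \<in> {(a, b, c), (b, c, a), (c, a, b)}"
    and lex: "lexlt x v \<and> lexlt v y \<or> lexlt v x \<and> lexlt y v"
    using lexlt_trans lexlt_asym by blast
  from rot T have "T = {v, x, y}" "delaunay_ccw S v x y"
    by (auto simp: delaunay_ccw_rotate insert_commute)
  with lex have "T \<in> lex_fan S v (lexlt x v \<and> lexlt v y)"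
    unfolding lex_fan_def mem_Collect_eq by (intro exI[of _ x] exI[of _ y]) auto
  moreover have "v \<in> S" using \<open>delaunay_ccw S v x y\<close> by (simp add: delaunay_ccw_def)
  ultimately show "T \<in> (\<Union>(v, up) \<in> S \<times> UNIV. lex_fan S v up)" by blast
qed

lemma finite_delaunay_triangles: "finite S \<Longrightarrow> finite (delaunay_triangles S)"
  by (rule finite_subset[of _ "(\<lambda>(a, b, c). {a, b, c}) ` (S \<times> S \<times> S)"])
    (auto simp: delaunay_triangles_def)

lemma card_delaunay_triangles:
  assumes "finite S" "general_position S"
  shows "card (delaunay_triangles S) \<le> 2 * card S"
proof -
  have fan_sub: "lex_fan S v up \<subseteq> delaunay_triangles S" for v up
    unfolding lex_fan_def delaunay_triangles_eq by blast
  have fan_finite: "finite (lex_fan S v up)" for v up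
    using finite_subset[OF fan_sub finite_delaunay_triangles[OF assms(1)]] .
  have fan_card: "card (lex_fan S v up) \<le> 1" for v up
    using lex_fan_subsingleton[OF assms(2)] fan_finite by (simp add: card_le_Suc0_iff_eq)
  have "card (delaunay_triangles S) \<le> card (\<Union>(v, up) \<in> S \<times> UNIV. lex_fan S v up)"
    by (rule card_mono[OF _ delaunay_triangles_subset_lex_fans]) (auto simp: assms(1) fan_finite)
  also have "\<dots> \<le> (\<Sum>(v, up) \<in> S \<times> UNIV. card (lex_fan S v up))"
    using card_UN_le[of "S \<times> UNIV" "\<lambda>(v, up). lex_fan S v up"] assms(1) by (simp add: case_prod_unfold)
  also have "\<dots> \<le> (\<Sum>(v, up) \<in> S \<times> (UNIV :: bool set). 1)"
    by (intro sum_mono) (use fan_card in \<open>auto simp: case_prod_unfold\<close>)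
  also have "\<dots> = 2 * card S" by (simp add: card_cartesian_product)
  finally show ?thesis .
qed

lemma card_hull_edges:
  assumes "finite S" "general_position S"
  shows "card (hull_edges S) \<le> card S"
proof -
  have "inj_on fst (hull_edges S)"
  proof (rule inj_onI)
    fix e e' assume "e \<in> hull_edges S" "e' \<in> hull_edges S" "fst e = fst e'"
    then obtain a b b' where e: "e = (a, b)" "e' = (a, b')" "a \<in> S" "b \<in> S" "b' \<in> S" "a \<noteq> b" "a \<noteq> b'"
      and left: "orient a b b' \<ge> 0" "orient a b' b \<ge> 0"
      unfolding hull_edges_def by auto
    show "e = e'"
    proof (rule ccontr)
      assume "e \<noteq> e'"
      with e have "orient a b b' \<noteq> 0"
        using assms(2) unfolding general_position_def by auto
      with left show False using orient_swap[of a b' b] by simp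
    qed
  qed
  then have "card (hull_edges S) = card (fst ` hull_edges S)" by (simp add: card_image)
  also have "\<dots> \<le> card S" by (rule card_mono[OF assms(1)]) (auto simp: hull_edges_def)
  finally show ?thesis .
qed

lemma finite_DT: "finite S \<Longrightarrow> finite (DT S)"
  unfolding DT_def
  by (auto simp: finite_delaunay_triangles intro: finite_subset[of _ "S \<times> S"] simp: hull_edges_def)

lemma card_DT:
  assumes "finite S" "general_position S"
  shows "card (DT S) \<le> 3 * card S"
proof -
  have "card (DT S) \<le> card (delaunay_triangles S) + card (hull_edges S)"
    unfolding DT_def by (rule le_trans[OF card_Un_le add_mono[OF card_image_le card_image_le]])
      (auto simp: finite_delaunay_triangles assms(1) intro: finite_subset[of _ "S \<times> S"] simp: hull_edges_def)
  with card_delaunay_triangles[OF assms] card_hull_edges[OF assms] show ?thesis by linarith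
qed

lemma DT_empty: "DT {} = {}"
  by (simp add: DT_def delaunay_triangles_def hull_edges_def)

lemma conflict_list_DT: "conflict_list t S = {}" if "t \<in> DT S"
proof -
  have "\<not> in_conflict t q" if "q \<in> S" for q
  proof (cases t)
    case (Tri T)
    with \<open>t \<in> DT S\<close> obtain a b c where "T = {a, b, c}" "delaunay_ccw S a b c"
      unfolding DT_def delaunay_triangles_eq by auto
    with Tri \<open>q \<in> S\<close> show ?thesis
      by (auto simp: delaunay_ccw_def not_less dest: incircle_ccw_triangle_eq)
  next
    case (HEdge a b)
    with \<open>t \<in> DT S\<close> \<open>q \<in> S\<close> show ?thesis by (auto simp: DT_def hull_edges_def)
  qed
  then show ?thesis by (auto simp: conflict_list_def)
qed

section \<open>Random insertion orders\<close>

definition permutations_prefix_avoiding :: "'a set \<Rightarrow> 'a set \<Rightarrow> nat \<Rightarrow> 'a list set" where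
  "permutations_prefix_avoiding A K j = {xs \<in> permutations_of_set A. set (take j xs) \<inter> K = {}}"

lemma card_permutations_prefix_avoiding_Suc_le:
  assumes "finite A" "A \<noteq> {}"
  shows "card (permutations_prefix_avoiding A K (Suc j))
           \<le> (\<Sum>x \<in> A - K. card (permutations_prefix_avoiding (A - {x}) K j))"
proof -
  let ?E = "\<lambda>x. permutations_prefix_avoiding (A - {x}) K j"
  have "permutations_prefix_avoiding A K (Suc j) \<subseteq> (\<Union>x \<in> A - K. (#) x ` ?E x)"
  proof
    fix xs assume xs: "xs \<in> permutations_prefix_avoiding A K (Suc j)"
    then obtain x ys where "x \<in> A" "ys \<in> permutations_of_set (A - {x})" "xs = x # ys"
      using permutations_of_set_nonempty[OF assms(2)] by (auto simp: permutations_prefix_avoiding_def)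
    with xs show "xs \<in> (\<Union>x \<in> A - K. (#) x ` ?E x)"
      by (auto simp: permutations_prefix_avoiding_def)
  qed
  then have "card (permutations_prefix_avoiding A K (Suc j)) \<le> card (\<Union>x \<in> A - K. (#) x ` ?E x)"
    using assms(1) by (intro card_mono) (simp_all add: permutations_prefix_avoiding_def)
  also have "\<dots> \<le> (\<Sum>x \<in> A - K. card ((#) x ` ?E x))"
    using assms(1) by (intro card_UN_le) simp
  also have "\<dots> = (\<Sum>x \<in> A - K. card (?E x))"
    by (simp add: card_image)
  finally show ?thesis .
qed

lemma exp_fact_avoiding_step:
  fixes k m j :: nat
  assumes "k \<le> m" "1 \<le> m"
  shows "real (m - k) * (exp (- real k * real j / real (m - 1)) * fact (m - 1))
           \<le> exp (- real k * real (Suc j) / real m) * fact m"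
proof (cases "k = m")
  case True
  then show ?thesis by simp
next
  case False
  with assms(1) have "k < m" by simp
  then have "real k * real j / real m \<le> real k * real j / real (m - 1)"
    by (cases "m = 1") (auto intro: divide_left_mono)
  then have "exp (- real k * real j / real (m - 1)) \<le> exp (- real k * real j / real m)"
    by simp
  then have "real (m - k) * (exp (- real k * real j / real (m - 1)) * fact (m - 1))
               \<le> real (m - k) * (exp (- real k * real j / real m) * fact (m - 1))"
    by (intro mult_left_mono mult_right_mono) auto
  also have "\<dots> = real (m - k) * fact (m - 1) * exp (- real k * real j / real m)"
    by simp
  also have "real (m - k) * fact (m - 1) = (1 - real k / real m) * fact m"
  proof -
    have "fact m = real m * fact (m - 1)" using assms by (simp add: fact_reduce)
    with assms show ?thesis by (simp add: of_nat_diff field_simps)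
  qed
  also have "\<dots> * exp (- real k * real j / real m)
               \<le> exp (- real k / real m) * fact m * exp (- real k * real j / real m)"
    using exp_ge_add_one_self[of "- real k / real m"] assms
    by (intro mult_right_mono) (auto simp: divide_le_eq)
  also have "\<dots> = exp (- real k / real m + - real k * real j / real m) * fact m"
    by (simp only: exp_add mult_ac)
  also have "- real k / real m + - real k * real j / real m = - real k * real (Suc j) / real m"
    using assms by (simp add: field_simps)
  finally show ?thesis .
qed

lemma card_permutations_prefix_avoiding:
  assumes "finite A" "K \<subseteq> A"
  shows "real (card (permutations_prefix_avoiding A K j))
           \<le> exp (- real (card K) * real j / real (card A)) * fact (card A)"
  using assms
proof (induction j arbitrary: A)
  case 0
  then show ?case by (simp add: permutations_prefix_avoiding_def)
next
  case (Suc j)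
  show ?case
  proof (cases "A = {}")
    case True
    with Suc.prems show ?thesis by (simp add: permutations_prefix_avoiding_def)
  next
    case False
    let ?m = "card A" and ?k = "card K"
    have m: "1 \<le> ?m" "?k \<le> ?m"
      using False Suc.prems by (auto simp: Suc_le_eq card_gt_0_iff card_mono)
    have "real (card (permutations_prefix_avoiding A K (Suc j)))
            \<le> (\<Sum>x \<in> A - K. real (card (permutations_prefix_avoiding (A - {x}) K j)))"
      using card_permutations_prefix_avoiding_Suc_le[OF Suc.prems(1) False]
      by (simp flip: of_nat_sum)
    also have "\<dots> \<le> (\<Sum>x \<in> A - K. exp (- real ?k * real j / real (?m - 1)) * fact (?m - 1))"
      using Suc.prems by (intro sum_mono) (auto intro: order.trans[OF Suc.IH] simp: card_Diff_singleton)
    also have "\<dots> = real (?m - ?k) * (exp (- real ?k * real j / real (?m - 1)) * fact (?m - 1))"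
      using Suc.prems by (simp add: card_Diff_subset finite_subset)
    also have "\<dots> \<le> exp (- real ?k * real (Suc j) / real ?m) * fact ?m"
      using exp_fact_avoiding_step[OF m(2,1)] .
    finally show ?thesis .
  qed
qed

lemma prob_permutation_prefix_avoiding:
  assumes "finite A" "K \<subseteq> A"
  shows "measure_pmf.prob (pmf_of_set (permutations_of_set A)) {xs. set (take j xs) \<inter> K = {}}
           \<le> exp (- real (card K) * real j / real (card A))"
proof -
  have "measure_pmf.prob (pmf_of_set (permutations_of_set A)) {xs. set (take j xs) \<inter> K = {}}
          = real (card (permutations_prefix_avoiding A K j)) / fact (card A)"
    using assms(1) by (simp add: measure_pmf_of_set Int_def permutations_prefix_avoiding_def)
  also have "\<dots> \<le> exp (- real (card K) * real j / real (card A))"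
    using card_permutations_prefix_avoiding[OF assms] by (simp add: divide_le_eq)
  finally show ?thesis .
qed

definition candidate_faces :: "pt set \<Rightarrow> cfg set" where
  "candidate_faces P = (\<lambda>(a, b, c). Tri {a, b, c}) ` (P \<times> P \<times> P) \<union> (\<lambda>(a, b). HEdge a b) ` (P \<times> P)"

lemma DT_subset_candidate_faces:
  assumes "S \<subseteq> P"
  shows "DT S \<subseteq> candidate_faces P"
proof
  fix t assume "t \<in> DT S"
  then consider a b c where "t = Tri {a, b, c}" "a \<in> S" "b \<in> S" "c \<in> S"
    | a b where "t = HEdge a b" "a \<in> S" "b \<in> S"
    unfolding DT_def delaunay_triangles_def hull_edges_def by auto
  then show "t \<in> candidate_faces P"
  proof cases
    case 1
    with assms show ?thesis unfolding candidate_faces_def by (intro UnI1 rev_image_eqI[of "(a, b, c)"]) auto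
  next
    case 2
    with assms show ?thesis unfolding candidate_faces_def by (intro UnI2 rev_image_eqI[of "(a, b)"]) auto
  qed
qed

lemma finite_candidate_faces: "finite P \<Longrightarrow> finite (candidate_faces P)"
  unfolding candidate_faces_def by simp

lemma card_candidate_faces:
  assumes "finite P"
  shows "card (candidate_faces P) \<le> 2 * card P ^ 3"
proof -
  have "card (candidate_faces P) \<le> card (P \<times> P \<times> P) + card (P \<times> P)"
    unfolding candidate_faces_def
    by (rule le_trans[OF card_Un_le add_mono[OF card_image_le card_image_le]]) (simp_all add: assms)
  also have "\<dots> = card P ^ 3 + card P ^ 2"
    by (simp add: card_cartesian_product power3_eq_cube power2_eq_square)
  also have "\<dots> \<le> 2 * card P ^ 3"
    using power_increasing[of 2 3 "card P"] by (cases "card P = 0") auto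
  finally show ?thesis .
qed

lemma large_conflict_face_of_prefix:
  assumes "finite P" "xs \<in> permutations_of_set P" "t \<in> DT (set (take j xs))"
    and "M < real (card (conflict_list t (set (drop j xs))))"
  shows "t \<in> candidate_faces P" "M < real (card (conflict_list t P))"
    and "set (take j xs) \<inter> conflict_list t P = {}"
proof -
  have P: "set (take j xs) \<subseteq> P" "set (drop j xs) \<subseteq> P"
    using assms(2) set_take_subset[of j xs] set_drop_subset[of j xs] by (auto dest: permutations_of_setD)
  show "t \<in> candidate_faces P" using DT_subset_candidate_faces[OF P(1)] assms(3) by blast
  have "card (conflict_list t (set (drop j xs))) \<le> card (conflict_list t P)"
    using P(2) assms(1) by (intro card_mono) (auto simp: conflict_list_def)
  with assms(4) show "M < real (card (conflict_list t P))" by linarith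
  show "set (take j xs) \<inter> conflict_list t P = {}"
    using conflict_list_DT[OF assms(3)] by (auto simp: conflict_list_def)
qed

lemma prob_DT_prefix_large_conflict:
  assumes "finite P"
  shows "measure_pmf.prob (pmf_of_set (permutations_of_set P))
           {xs. \<exists>t \<in> DT (set (take j xs)). M < real (card (conflict_list t (set (drop j xs))))}
         \<le> real (card (candidate_faces P)) * exp (- M * real j / real (card P))"
proof -
  let ?p = "pmf_of_set (permutations_of_set P)"
  let ?Bad = "{xs. \<exists>t \<in> DT (set (take j xs)). M < real (card (conflict_list t (set (drop j xs))))}"
  let ?G = "{t \<in> candidate_faces P. M < real (card (conflict_list t P))}"
  let ?E = "\<lambda>t. {xs. set (take j xs) \<inter> conflict_list t P = {}}"
  have "?Bad \<inter> permutations_of_set P \<subseteq> (\<Union>t \<in> ?G. ?E t)"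
  proof
    fix xs assume "xs \<in> ?Bad \<inter> permutations_of_set P"
    then obtain t where xs: "xs \<in> permutations_of_set P" "t \<in> DT (set (take j xs))"
      "M < real (card (conflict_list t (set (drop j xs))))" by blast
    from large_conflict_face_of_prefix[OF assms xs] have "t \<in> ?G" "xs \<in> ?E t" by simp_all
    then show "xs \<in> (\<Union>t \<in> ?G. ?E t)" by blast
  qed
  then have "measure_pmf.prob ?p (?Bad \<inter> permutations_of_set P) \<le> measure_pmf.prob ?p (\<Union>t \<in> ?G. ?E t)"
    by (rule measure_pmf.finite_measure_mono) simp
  also have "\<dots> \<le> (\<Sum>t \<in> ?G. measure_pmf.prob ?p (?E t))"
    using assms by (intro measure_pmf.finite_measure_subadditive_finite) (auto simp: finite_candidate_faces)
  also have "\<dots> \<le> (\<Sum>t \<in> ?G. exp (- M * real j / real (card P)))"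
  proof (rule sum_mono)
    fix t assume t: "t \<in> ?G"
    have "measure_pmf.prob ?p (?E t) \<le> exp (- real (card (conflict_list t P)) * real j / real (card P))"
      using assms by (intro prob_permutation_prefix_avoiding) (auto simp: conflict_list_def)
    also have "\<dots> \<le> exp (- M * real j / real (card P))"
      using t by (auto intro!: divide_right_mono mult_right_mono)
    finally show "measure_pmf.prob ?p (?E t) \<le> exp (- M * real j / real (card P))" .
  qed
  also have "\<dots> \<le> real (card (candidate_faces P)) * exp (- M * real j / real (card P))"
    using assms by (simp add: card_mono finite_candidate_faces)
  finally show ?thesis
    using measure_Int_set_pmf[of ?p ?Bad] assms by simp
qed

lemma sum_face_costs_le:
  assumes "A \<subseteq> DT S" "finite S" "general_position S"
    and "\<forall>t \<in> DT S. real (card (conflict_list t R)) \<le> M" "0 \<le> M"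
  shows "real (\<Sum>t \<in> A. 1 + card (conflict_list t R)) \<le> 3 * real (card S) * (1 + M)"
proof -
  have "card A \<le> card (DT S)" using assms(1,2) by (intro card_mono finite_DT)
  also have "\<dots> \<le> 3 * card S" using card_DT[OF assms(2,3)] .
  finally have card_A: "real (card A) \<le> 3 * real (card S)" by linarith
  have "real (\<Sum>t \<in> A. 1 + card (conflict_list t R)) = (\<Sum>t \<in> A. 1 + real (card (conflict_list t R)))"
    by simp
  also have "\<dots> \<le> real (card A) * (1 + M)"
    using assms(1,4) by (intro sum_bounded_above) auto
  also have "\<dots> \<le> 3 * real (card S) * (1 + M)"
    using card_A assms(5) by (intro mult_right_mono) auto
  finally show ?thesis .
qed

lemma stage_work_le:
  assumes "distinct xs" "general_position (set xs)" "i \<le> length xs"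
    and "\<forall>t \<in> DT (set (take i xs)). real (card (conflict_list t (set (drop i xs)))) \<le> M"
    and "\<forall>t \<in> DT (set (take (i - 1) xs)). real (card (conflict_list t (set (drop (i - 1) xs)))) \<le> M'"
    and "0 \<le> M" "0 \<le> M'"
  shows "real (stage_work xs i) \<le> 3 * real i * (1 + M) + 3 * real (i - 1) * (1 + M')"
proof -
  have prefix: "finite (set (take k xs))" "general_position (set (take k xs))"
    "card (set (take k xs)) = k" if "k \<le> length xs" for k
    using that assms(1) general_position_subset[OF assms(2) set_take_subset]
    by (simp_all add: distinct_card)
  have created: "real (\<Sum>t \<in> DT (set (take i xs)) - DT (set (take (i - 1) xs)).
                   1 + card (conflict_list t (set (drop i xs)))) \<le> 3 * real i * (1 + M)"
    using sum_face_costs_le[OF _ prefix(1,2) assms(4,6)] prefix(3) assms(3) by auto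
  have destroyed: "real (\<Sum>t \<in> DT (set (take (i - 1) xs)) - DT (set (take i xs)).
                   1 + card (conflict_list t (set (drop (i - 1) xs)))) \<le> 3 * real (i - 1) * (1 + M')"
    using sum_face_costs_le[OF _ prefix(1,2) assms(5,7)] prefix(3) assms(3) by auto
  show ?thesis
    using created destroyed unfolding stage_work_def Let_def of_nat_add by linarith
qed

lemma prob_DT_prefix_conflict_exceeds_log:
  assumes "finite P" "card P = n" "2 \<le> n" "0 \<le> c"
  shows "measure_pmf.prob (pmf_of_set (permutations_of_set P))
           {xs. \<exists>t \<in> DT (set (take j xs)).
                  (c + 5) * real n * ln (real n) / real j < real (card (conflict_list t (set (drop j xs))))}
         \<le> real n powr (- c) / 2"
proof (cases "j = 0")
  case True
  then show ?thesis by (simp add: DT_empty)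
next
  case False
  have n: "real n \<ge> 2" using assms(3) by simp
  have "- ((c + 5) * real n * ln (real n) / real j) * real j / real n = (- c - 5) * ln (real n)"
    using False n by (simp add: field_simps)
  then have "exp (- ((c + 5) * real n * ln (real n) / real j) * real j / real n) = real n powr (- c - 5)"
    using n by (simp add: powr_def)
  also have "\<dots> = real n powr (- c) / real n ^ 5"
    using n by (simp add: powr_diff powr_realpow)
  finally have exp_eq: "exp (- ((c + 5) * real n * ln (real n) / real j) * real j / real n)
                          = real n powr (- c) / real n ^ 5" .
  have "real (card (candidate_faces P)) \<le> 2 * real n ^ 3"
    using card_candidate_faces[OF assms(1)] assms(2) by (simp flip: of_nat_power)
  then have "real (card (candidate_faces P)) * (real n powr (- c) / real n ^ 5)
               \<le> 2 * real n ^ 3 * (real n powr (- c) / real n ^ 5)"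
    by (intro mult_right_mono) auto
  also have "\<dots> = real n powr (- c) * (2 / real n ^ 2)"
    using n by (simp add: field_simps power_add[symmetric] eval_nat_numeral)
  also have "\<dots> \<le> real n powr (- c) * (1 / 2)"
    using power_mono[OF n, of 2] by (intro mult_left_mono) (auto simp: divide_le_eq)
  finally have "real (card (candidate_faces P)) * (real n powr (- c) / real n ^ 5)
                  \<le> real n powr (- c) * (1 / 2)" .
  moreover note prob_DT_prefix_large_conflict[OF assms(1), of j "(c + 5) * real n * ln (real n) / real j"]
  ultimately show ?thesis unfolding assms(2) exp_eq by linarith
qed

lemma ln_ge_half: "2 \<le> n \<Longrightarrow> 1 / 2 \<le> ln (real n)"
proof -
  assume "2 \<le> n"
  then have "- ln (real n) \<le> 1 / real n - 1" "1 / real n \<le> 1 / 2"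
    using ln_le_minus_one[of "1 / real n"] by (simp_all add: ln_div divide_le_eq)
  then show ?thesis by linarith
qed

lemma stage_work_le_log:
  assumes xs: "xs \<in> permutations_of_set P" and P: "finite P" "card P = n" "general_position P"
    and "i \<le> n" "2 \<le> n" "0 \<le> c"
    and small: "\<forall>j \<in> {i, i - 1}. \<forall>t \<in> DT (set (take j xs)).
                  real (card (conflict_list t (set (drop j xs)))) \<le> (c + 5) * real n * ln (real n) / real j"
  shows "real (stage_work xs i) \<le> 6 * (c + 7) * real n * ln (real n)"
proof -
  define M where "M j = (c + 5) * real n * ln (real n) / real j" for j :: nat
  have ln_n: "1 / 2 \<le> ln (real n)" using ln_ge_half \<open>2 \<le> n\<close> .
  have M: "0 \<le> M j" "real j * M j \<le> (c + 5) * real n * ln (real n)" for j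
    using ln_n \<open>0 \<le> c\<close> by (cases "j = 0"; simp add: M_def)+
  have "distinct xs" "set xs = P" "length xs = n"
    using xs P by (auto dest: permutations_of_setD length_finite_permutations_of_set)
  then have "real (stage_work xs i) \<le> 3 * real i * (1 + M i) + 3 * real (i - 1) * (1 + M (i - 1))"
    using P(3) \<open>i \<le> n\<close> M(1) small by (intro stage_work_le) (auto simp: M_def)
  also have "\<dots> \<le> 6 * real n + 6 * ((c + 5) * real n * ln (real n))"
    using M(2)[of i] M(2)[of "i - 1"] \<open>i \<le> n\<close> by (simp add: algebra_simps)
  also have "\<dots> \<le> 6 * (c + 7) * real n * ln (real n)"
    using ln_n \<open>2 \<le> n\<close> by (simp add: algebra_simps)
  finally show ?thesis .
qed

lemma prob_stage_work_le:
  assumes P: "finite P" "card P = n" "general_position P" and "i \<le> n" "2 \<le> n" "0 \<le> c"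
  shows "measure_pmf.prob (pmf_of_set (permutations_of_set P))
           {xs. real (stage_work xs i) \<le> 6 * (c + 7) * real n * ln (real n)}
         \<ge> 1 - real n powr (- c)"
proof -
  let ?p = "pmf_of_set (permutations_of_set P)"
  define Bad where "Bad j = {xs. \<exists>t \<in> DT (set (take j xs)).
     (c + 5) * real n * ln (real n) / real j < real (card (conflict_list t (set (drop j xs))))}" for j
  define Good where "Good = {xs. real (stage_work xs i) \<le> 6 * (c + 7) * real n * ln (real n)}"
  have "(UNIV - Good) \<inter> set_pmf ?p \<subseteq> Bad i \<union> Bad (i - 1)"
    using stage_work_le_log[OF _ assms] P(1) by (force simp: Good_def Bad_def not_less)
  then have "measure_pmf.prob ?p (UNIV - Good) \<le> measure_pmf.prob ?p (Bad i \<union> Bad (i - 1))"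
    by (subst measure_Int_set_pmf[symmetric]) (rule measure_pmf.finite_measure_mono, simp_all)
  also have "\<dots> \<le> measure_pmf.prob ?p (Bad i) + measure_pmf.prob ?p (Bad (i - 1))"
    by (rule measure_Un_le) simp_all
  also have "\<dots> \<le> real n powr (- c)"
    using prob_DT_prefix_conflict_exceeds_log[OF P(1,2) \<open>2 \<le> n\<close> \<open>0 \<le> c\<close>, of i]
      prob_DT_prefix_conflict_exceeds_log[OF P(1,2) \<open>2 \<le> n\<close> \<open>0 \<le> c\<close>, of "i - 1"]
    unfolding Bad_def by linarith
  finally show ?thesis
    using measure_pmf.prob_compl[of Good ?p] by (simp add: Good_def)
qed

theorem mainTheorem4:
  fixes c :: real
  assumes "c > 0"
  shows "\<exists>C > 0. \<forall>(P :: pt set) (n :: nat) (i :: nat).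
           finite P \<and> card P = n \<and> general_position P \<and> 1 \<le> i \<and> i \<le> n \<longrightarrow>
           measure_pmf.prob (pmf_of_set (permutations_of_set P))
             {xs. real (stage_work xs i) \<le> C * real n * ln (real n)}
           \<ge> 1 - real n powr (- c)"
proof (intro exI[of _ "6 * (c + 7)"] conjI allI impI)
  show "6 * (c + 7) > 0" using assms by simp
next
  fix P :: "pt set" and n i :: nat
  assume H: "finite P \<and> card P = n \<and> general_position P \<and> 1 \<le> i \<and> i \<le> n"
  show "measure_pmf.prob (pmf_of_set (permutations_of_set P))
          {xs. real (stage_work xs i) \<le> 6 * (c + 7) * real n * ln (real n)} \<ge> 1 - real n powr (- c)"
  proof (cases "n \<ge> 2")
    case True
    with H assms show ?thesis by (intro prob_stage_work_le) auto
  next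
    case False
    with H have "n = 1" by linarith
    then show ?thesis by simp
  qed
qed

end
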